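(* Let $n\ge 2$, $1\le p<\infty$, $q=1/p$. Let $\lambda=(\lambda_{ij})$ be an $n\times n$ matrix with nonnegative entries and all row sums equal to $1$, such that $\mathrm{per}(\lambda^q)>0$. Define the $n\times n$ matrix $\bar\lambda$ by $$\bar\lambda_{ij} = \frac{\lambda_{ij}^q\,\mathrm{per}\left(\lambda^q[i,j]\right)}{\mathrm{per}(\lambda^q)}.$$ Then $\mathrm{per}(\bar\lambda^q) \ge \mathrm{per}(\lambda^q)$.
   Context: For a matrix $M$ with nonnegative entries, $M^q$ denotes the matrix obtained by raising each entry to the $q$-th power (with $0^q=0$). For an $n\times n$ matrix $M$, $M[i,j]$ denotes the $(n-1)\times(n-1)$ matrix obtained by deleting row $i$ and column $j$, and $\lambda^q[i,j]$ denotes $(\lambda[i,j])^q$. $\mathrm{per}$ is the permanent. *)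

theory Defs
  imports "HOL-Combinatorics.Permutations" Complex_Main
begin

text \<open>n x n real matrices represented as functions nat => nat => real, indices in {0..<n}.\<close>

definition per :: "nat \<Rightarrow> (nat \<Rightarrow> nat \<Rightarrow> real) \<Rightarrow> real" where
  "per n A = (\<Sum>\<sigma> \<in> {\<sigma>. \<sigma> permutes {0..<n}}. \<Prod>i<n. A i (\<sigma> i))"

text \<open>Deleting row i and column j: the (n-1)x(n-1) matrix, reindexed to {0..<n-1}.\<close>
definition minor :: "(nat \<Rightarrow> nat \<Rightarrow> real) \<Rightarrow> nat \<Rightarrow> nat \<Rightarrow> (nat \<Rightarrow> nat \<Rightarrow> real)" where
  "minor A i j = (\<lambda>k l. A (if k < i then k else Suc k) (if l < j then l else Suc l))"

text \<open>Entrywise power; note 0 powr q = 0 in Isabelle, matching the convention 0^q = 0.\<close>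
definition epow :: "(nat \<Rightarrow> nat \<Rightarrow> real) \<Rightarrow> real \<Rightarrow> (nat \<Rightarrow> nat \<Rightarrow> real)" where
  "epow A q = (\<lambda>i j. A i j powr q)"

end

theory Submission
  imports Defs "Jordan_Normal_Form.Determinant"
begin

text \<open>
  Put a(\<sigma>) = \<Prod>k. \<lambda>(k, \<sigma> k)^q, so that per(\<lambda>^q) = \<Sum>\<sigma>. a(\<sigma>). By Laplace expansion the
  matrix \<mu> of the theorem (the bar-\<lambda> of the paper) is the matrix of marginals
  \<mu>(i, j) = P(\<sigma> i = j) of the distribution a / per(\<lambda>^q) on permutations, so its rows sum
  to 1. With b(\<sigma>) = \<Prod>k. \<mu>(k, \<sigma> k)^q, the log-sum inequality gives
  per(\<lambda>^q) ln(per(\<lambda>^q) / \<Sum>\<sigma>. b(\<sigma>)) \<le> \<Sum>\<sigma>. a(\<sigma>) ln(a(\<sigma>) / b(\<sigma>)).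
  Since ln(a(\<sigma>) / b(\<sigma>)) is a sum over the rows, the right-hand side equals
  -q per(\<lambda>^q) \<Sum>k. KL(\<mu>(k, -) || \<lambda>(k, -)), which is \<le> 0 by Gibbs' inequality because
  the rows of \<lambda> sum to at most 1. Hence per(\<lambda>^q) \<le> \<Sum>\<sigma>. b(\<sigma>) = per(\<mu>^q).
\<close>

lemma per_cong:
  assumes "\<And>i j. i < n \<Longrightarrow> j < n \<Longrightarrow> A i j = B i j"
  shows "per n A = per n B"
  unfolding per_def by (intro sum.cong prod.cong refl) (simp add: assms permutes_nat_less)

lemma prod_permutes_nonneg:
  fixes A :: "nat \<Rightarrow> nat \<Rightarrow> real"
  assumes "\<And>i j. i < n \<Longrightarrow> j < n \<Longrightarrow> 0 \<le> A i j" and "\<sigma> permutes {0..<n}"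
  shows "0 \<le> (\<Prod>k<n. A k (\<sigma> k))"
  by (intro prod_nonneg) (simp add: assms permutes_nat_less)

lemma sum_permutes_by_value:
  assumes "finite S" "k \<in> S"
  shows "(\<Sum>\<sigma>\<in>{\<sigma>. \<sigma> permutes S}. g \<sigma>) = (\<Sum>j\<in>S. \<Sum>\<sigma>\<in>{\<sigma>. \<sigma> permutes S \<and> \<sigma> k = j}. g \<sigma>)"
proof -
  have "(\<lambda>\<sigma>. \<sigma> k) ` {\<sigma>. \<sigma> permutes S} \<subseteq> S"
    using assms(2) permutes_in_image by fastforce
  from sum.group[OF finite_permutations[OF assms(1)] assms(1) this, of g] show ?thesis
    by simp
qed

lemma minor_insert_index: "minor A i j k l = A (insert_index i k) (insert_index j l)"
  by (simp add: minor_def insert_index_def)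

lemma lessThan_Suc_insert_index:
  assumes "i < Suc m"
  shows "{..<Suc m} = insert i (insert_index i ` {..<m})"
  using insert_index_image[OF assms] assms by (auto simp: atLeast0LessThan)

lemma permutation_insert_insert_index:
  "permutation_insert i j q (insert_index i k) = insert_index j (q k)"
  by (simp add: permutation_insert_expand insert_index_def)

lemma prod_permutation_insert:
  assumes "i < Suc m"
  shows "(\<Prod>k<Suc m. A k (permutation_insert i j q k)) = A i j * (\<Prod>k<m. minor A i j k (q k))"
  unfolding lessThan_Suc_insert_index[OF assms]
  by (subst prod.insert)
    (auto simp: prod.reindex insert_index_inj_on minor_insert_index
      permutation_insert_insert_index dest: sym)

lemma mult_per_minor:
  assumes "i < n" "j < n"
  shows "A i j * per (n - 1) (minor A i j)
    = (\<Sum>\<sigma>\<in>{\<sigma>. \<sigma> permutes {0..<n} \<and> \<sigma> i = j}. \<Prod>k<n. A k (\<sigma> k))"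
proof -
  obtain m where n: "n = Suc m" using assms by (cases n) auto
  have "(\<Sum>\<sigma>\<in>{\<sigma>. \<sigma> permutes {0..<n} \<and> \<sigma> i = j}. \<Prod>k<n. A k (\<sigma> k))
      = (\<Sum>q\<in>{q. q permutes {0..<m}}. \<Prod>k<Suc m. A k (permutation_insert i j q k))"
    using assms by (simp add: n permutation_fix sum.reindex permutation_insert_inj_on)
  also have "\<dots> = A i j * per (n - 1) (minor A i j)"
    using assms by (simp add: n prod_permutation_insert per_def sum_distrib_left del: prod.lessThan_Suc)
  finally show ?thesis ..
qed

lemma gibbs_inequality:
  fixes x y :: "'a \<Rightarrow> real"
  assumes "finite I"
    and "\<And>j. j \<in> I \<Longrightarrow> 0 \<le> x j" "\<And>j. j \<in> I \<Longrightarrow> 0 \<le> y j"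
    and "\<And>j. j \<in> I \<Longrightarrow> 0 < x j \<Longrightarrow> 0 < y j"
    and "sum y I \<le> sum x I"
  shows "(\<Sum>j\<in>I. x j * ln (y j)) \<le> (\<Sum>j\<in>I. x j * ln (x j))"
proof -
  have "x j * ln (y j) - x j * ln (x j) \<le> y j - x j" if j: "j \<in> I" for j
  proof (cases "x j = 0")
    case False
    then have "0 < x j" "0 < y j" using assms(2,4) j by force+
    moreover from this have "ln (y j / x j) \<le> y j / x j - 1"
      by (intro ln_le_minus_one) simp
    ultimately show ?thesis
      by (simp add: ln_div field_simps)
  qed (use assms(3) j in simp)
  then have "(\<Sum>j\<in>I. x j * ln (y j) - x j * ln (x j)) \<le> (\<Sum>j\<in>I. y j - x j)"
    by (rule sum_mono)
  with assms(5) show ?thesis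
    by (simp add: sum_subtractf)
qed

lemma sum_pos_if_pos_imp_pos:
  fixes a b :: "'a \<Rightarrow> real"
  assumes "finite S" "\<And>s. s \<in> S \<Longrightarrow> 0 \<le> b s" "\<And>s. s \<in> S \<Longrightarrow> 0 < a s \<Longrightarrow> 0 < b s"
    and "0 < sum a S"
  shows "0 < sum b S"
proof -
  obtain s where "s \<in> S" "0 < a s"
    using assms(4) sum_nonpos[of S a] by (meson not_le)
  with assms show ?thesis
    by (intro sum_pos2[of S s]) auto
qed

lemma log_sum_inequality:
  fixes a b :: "'a \<Rightarrow> real"
  assumes "finite S" "\<And>s. s \<in> S \<Longrightarrow> 0 \<le> a s" "\<And>s. s \<in> S \<Longrightarrow> 0 \<le> b s"
    and "\<And>s. s \<in> S \<Longrightarrow> 0 < a s \<Longrightarrow> 0 < b s"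
  shows "sum a S * ln (sum a S / sum b S) \<le> (\<Sum>s\<in>S. a s * ln (a s / b s))"
proof (cases "sum a S = 0")
  case True
  with assms(1,2) have "a s = 0" if "s \<in> S" for s
    using that sum_nonneg_eq_0_iff by blast
  with True show ?thesis
    by simp
next
  case False
  with assms(2) have sum_a: "0 < sum a S"
    by (simp add: order_less_le sum_nonneg)
  have sum_b: "0 < sum b S"
    using assms(1,3,4) sum_a by (rule sum_pos_if_pos_imp_pos)
  define r where "r = sum a S / sum b S"
  have r: "0 < r"
    using sum_a sum_b by (simp add: r_def)
  have "a s - r * b s \<le> a s * ln (a s / b s) - a s * ln r" if s: "s \<in> S" for s
  proof (cases "a s = 0")
    case True
    with r assms(3)[OF s] show ?thesis
      by simp
  next
    case False
    with assms s have as: "0 < a s" and bs: "0 < b s"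
      by (auto simp: order_less_le)
    have "ln (r * b s / a s) \<le> r * b s / a s - 1"
      using r as bs by (intro ln_le_minus_one) simp
    with r as bs show ?thesis
      by (simp add: ln_div ln_mult field_simps)
  qed
  then have "(\<Sum>s\<in>S. a s - r * b s) \<le> (\<Sum>s\<in>S. a s * ln (a s / b s) - a s * ln r)"
    by (rule sum_mono)
  moreover have "(\<Sum>s\<in>S. a s - r * b s) = 0"
    unfolding sum_subtractf sum_distrib_left[symmetric] r_def using sum_b by simp
  moreover have "(\<Sum>s\<in>S. a s * ln (a s / b s) - a s * ln r)
      = (\<Sum>s\<in>S. a s * ln (a s / b s)) - sum a S * ln r"
    by (simp add: sum_subtractf sum_distrib_right)
  ultimately show ?thesis
    unfolding r_def[symmetric] by linarith
qed

lemma sum_le_sum_of_relative_entropy_nonpos: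
  fixes a b :: "'a \<Rightarrow> real"
  assumes "finite S" "\<And>s. s \<in> S \<Longrightarrow> 0 \<le> a s" "\<And>s. s \<in> S \<Longrightarrow> 0 \<le> b s"
    and "\<And>s. s \<in> S \<Longrightarrow> 0 < a s \<Longrightarrow> 0 < b s"
    and "(\<Sum>s\<in>S. a s * ln (a s / b s)) \<le> 0"
  shows "sum a S \<le> sum b S"
proof (cases "sum a S = 0")
  case True
  with assms(3) show ?thesis
    by (simp add: sum_nonneg)
next
  case False
  with assms(2) have "0 < sum a S"
    by (simp add: order_less_le sum_nonneg)
  moreover from this have "0 < sum b S"
    using assms(1,3,4) by (rule sum_pos_if_pos_imp_pos[rotated 3])
  moreover have "sum a S * ln (sum a S / sum b S) \<le> (\<Sum>s\<in>S. a s * ln (a s / b s))"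
    using assms(1-4) by (rule log_sum_inequality)
  then have "sum a S * ln (sum a S / sum b S) \<le> 0"
    using assms(5) by (rule order_trans)
  ultimately show ?thesis
    by (simp add: mult_le_0_iff ln_le_zero_iff)
qed

lemma ln_prod_powr_divide:
  fixes x y :: "'a \<Rightarrow> real"
  assumes "finite K" "\<And>k. k \<in> K \<Longrightarrow> 0 < x k" "\<And>k. k \<in> K \<Longrightarrow> 0 < y k"
  shows "ln ((\<Prod>k\<in>K. x k powr q) / (\<Prod>k\<in>K. y k powr q)) = (\<Sum>k\<in>K. q * (ln (x k) - ln (y k)))"
proof -
  have "ln (\<Prod>k\<in>K. x k powr q) = (\<Sum>k\<in>K. q * ln (x k))"
    using assms(1,2) by (subst ln_prod) (auto simp: less_imp_not_eq2)
  moreover have "ln (\<Prod>k\<in>K. y k powr q) = (\<Sum>k\<in>K. q * ln (y k))"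
    using assms(1,3) by (subst ln_prod) (auto simp: less_imp_not_eq2)
  moreover have "0 < (\<Prod>k\<in>K. x k powr q)" "0 < (\<Prod>k\<in>K. y k powr q)"
    using assms by (auto intro!: prod_pos simp: less_imp_not_eq2)
  ultimately show ?thesis
    by (simp add: ln_div sum_subtractf algebra_simps)
qed

definition per_marginal :: "nat \<Rightarrow> (nat \<Rightarrow> nat \<Rightarrow> real) \<Rightarrow> nat \<Rightarrow> nat \<Rightarrow> real" where
  "per_marginal n A i j =
    (\<Sum>\<sigma>\<in>{\<sigma>. \<sigma> permutes {0..<n} \<and> \<sigma> i = j}. \<Prod>k<n. A k (\<sigma> k)) / per n A"

lemma per_marginal_eq_minor:
  assumes "i < n" "j < n"
  shows "per_marginal n A i j = A i j * per (n - 1) (minor A i j) / per n A"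
  using mult_per_minor[OF assms] by (simp add: per_marginal_def)

lemma per_marginal_nonneg:
  assumes "\<And>i j. i < n \<Longrightarrow> j < n \<Longrightarrow> 0 \<le> A i j" and "0 \<le> per n A"
  shows "0 \<le> per_marginal n A i j"
  unfolding per_marginal_def
  using assms by (auto intro!: divide_nonneg_nonneg sum_nonneg prod_permutes_nonneg)

lemma per_marginal_pos:
  assumes "\<And>i j. i < n \<Longrightarrow> j < n \<Longrightarrow> 0 \<le> A i j" and "0 < per n A"
    and "\<sigma> permutes {0..<n}" "0 < (\<Prod>k<n. A k (\<sigma> k))"
  shows "0 < per_marginal n A i (\<sigma> i)"
proof -
  have "(\<Prod>k<n. A k (\<sigma> k)) \<le> (\<Sum>\<tau>\<in>{\<tau>. \<tau> permutes {0..<n} \<and> \<tau> i = \<sigma> i}. \<Prod>k<n. A k (\<tau> k))"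
    using assms(3) finite_permutations[of "{0..<n}"]
    by (intro member_le_sum prod_permutes_nonneg[OF assms(1)]) auto
  with assms(2,4) show ?thesis
    by (simp add: per_marginal_def)
qed

lemma sum_per_marginal_row:
  assumes "per n A \<noteq> 0" "i < n"
  shows "(\<Sum>j<n. per_marginal n A i j) = 1"
  using assms sum_permutes_by_value[of "{0..<n}" i "\<lambda>\<sigma>. \<Prod>k<n. A k (\<sigma> k)"]
  by (simp add: per_marginal_def per_def atLeast0LessThan flip: sum_divide_distrib)

lemma sum_permutes_additive_eq_per_marginal:
  assumes "per n A \<noteq> 0"
  shows "(\<Sum>\<sigma>\<in>{\<sigma>. \<sigma> permutes {0..<n}}. (\<Prod>k<n. A k (\<sigma> k)) * (\<Sum>k<n. f k (\<sigma> k)))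
       = per n A * (\<Sum>k<n. \<Sum>j<n. per_marginal n A k j * f k j)"
proof -
  have row: "(\<Sum>\<sigma>\<in>{\<sigma>. \<sigma> permutes {0..<n}}. (\<Prod>k<n. A k (\<sigma> k)) * f k (\<sigma> k))
      = per n A * (\<Sum>j<n. per_marginal n A k j * f k j)" if "k < n" for k
  proof -
    have "(\<Sum>\<sigma>\<in>{\<sigma>. \<sigma> permutes {0..<n}}. (\<Prod>k<n. A k (\<sigma> k)) * f k (\<sigma> k))
        = (\<Sum>j\<in>{0..<n}. \<Sum>\<sigma>\<in>{\<sigma>. \<sigma> permutes {0..<n} \<and> \<sigma> k = j}. (\<Prod>k<n. A k (\<sigma> k)) * f k (\<sigma> k))"
      using that by (subst sum_permutes_by_value[of _ k]) auto
    also have "\<dots> = (\<Sum>j<n. (\<Sum>\<sigma>\<in>{\<sigma>. \<sigma> permutes {0..<n} \<and> \<sigma> k = j}. \<Prod>k<n. A k (\<sigma> k)) * f k j)"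
      by (auto simp: atLeast0LessThan sum_distrib_right intro!: sum.cong)
    finally show ?thesis
      using assms by (simp add: per_marginal_def sum_distrib_left)
  qed
  have "(\<Sum>\<sigma>\<in>{\<sigma>. \<sigma> permutes {0..<n}}. (\<Prod>k<n. A k (\<sigma> k)) * (\<Sum>k<n. f k (\<sigma> k)))
      = (\<Sum>k<n. \<Sum>\<sigma>\<in>{\<sigma>. \<sigma> permutes {0..<n}}. (\<Prod>k<n. A k (\<sigma> k)) * f k (\<sigma> k))"
    by (simp add: sum_distrib_left sum.swap[of _ "{\<sigma>. \<sigma> permutes {0..<n}}"])
  also have "\<dots> = per n A * (\<Sum>k<n. \<Sum>j<n. per_marginal n A k j * f k j)"
    by (simp add: row sum_distrib_left)
  finally show ?thesis .
qed

lemma gibbs_per_marginal_row: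
  fixes lam :: "nat \<Rightarrow> nat \<Rightarrow> real"
  assumes "\<And>i j. i < n \<Longrightarrow> j < n \<Longrightarrow> 0 \<le> lam i j"
    and "(\<Sum>j<n. lam i j) \<le> 1" "i < n"
    and "0 < per n (epow lam q)"
  shows "(\<Sum>j<n. per_marginal n (epow lam q) i j * ln (lam i j))
       \<le> (\<Sum>j<n. per_marginal n (epow lam q) i j * ln (per_marginal n (epow lam q) i j))"
proof (rule gibbs_inequality)
  show "0 \<le> per_marginal n (epow lam q) i j" for j
    using assms(4) by (intro per_marginal_nonneg) (auto simp: epow_def)
  show "0 < lam i j" if "j \<in> {..<n}" "0 < per_marginal n (epow lam q) i j" for j
  proof -
    have "lam i j \<noteq> 0"
      using that assms(3) by (auto simp: per_marginal_eq_minor epow_def)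
    with assms(1)[of i j] that(1) assms(3) show ?thesis by simp
  qed
  show "(\<Sum>j<n. lam i j) \<le> (\<Sum>j<n. per_marginal n (epow lam q) i j)"
    using assms(2-4) by (simp add: sum_per_marginal_row)
qed (use assms in auto)

lemma sum_permutes_log_ratio_per_marginal_nonpos:
  fixes lam :: "nat \<Rightarrow> nat \<Rightarrow> real"
  assumes "0 \<le> q"
    and "\<And>i j. i < n \<Longrightarrow> j < n \<Longrightarrow> 0 \<le> lam i j"
    and "\<And>i. i < n \<Longrightarrow> (\<Sum>j<n. lam i j) \<le> 1"
    and "0 < per n (epow lam q)"
  shows "(\<Sum>\<sigma>\<in>{\<sigma>. \<sigma> permutes {0..<n}}. (\<Prod>k<n. epow lam q k (\<sigma> k)) *
           (\<Sum>k<n. q * (ln (lam k (\<sigma> k)) - ln (per_marginal n (epow lam q) k (\<sigma> k))))) \<le> 0"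
proof -
  let ?L = "per_marginal n (epow lam q)"
  have "(\<Sum>j<n. ?L k j * (q * (ln (lam k j) - ln (?L k j)))) \<le> 0" if "k < n" for k
  proof -
    have "(\<Sum>j<n. ?L k j * (q * (ln (lam k j) - ln (?L k j))))
        = q * ((\<Sum>j<n. ?L k j * ln (lam k j)) - (\<Sum>j<n. ?L k j * ln (?L k j)))"
      by (simp add: algebra_simps sum_subtractf sum_distrib_left)
    also have "\<dots> \<le> 0"
      using assms that gibbs_per_marginal_row[of n lam k q] by (simp add: mult_nonneg_nonpos)
    finally show ?thesis .
  qed
  then have "(\<Sum>k<n. \<Sum>j<n. ?L k j * (q * (ln (lam k j) - ln (?L k j)))) \<le> 0"
    by (rule sum_nonpos) simp
  then have "per n (epow lam q) * (\<Sum>k<n. \<Sum>j<n. ?L k j * (q * (ln (lam k j) - ln (?L k j)))) \<le> 0"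
    by (rule mult_nonneg_nonpos[OF less_imp_le[OF assms(4)]])
  with assms(4) show ?thesis
    by (subst sum_permutes_additive_eq_per_marginal) auto
qed

theorem per_epow_le_per_epow_per_marginal:
  fixes lam :: "nat \<Rightarrow> nat \<Rightarrow> real"
  assumes "0 \<le> q"
    and lam_nonneg: "\<And>i j. i < n \<Longrightarrow> j < n \<Longrightarrow> 0 \<le> lam i j"
    and "\<And>i. i < n \<Longrightarrow> (\<Sum>j<n. lam i j) \<le> 1"
    and per_pos: "0 < per n (epow lam q)"
  shows "per n (epow lam q) \<le> per n (epow (per_marginal n (epow lam q)) q)"
proof -
  define L where "L = per_marginal n (epow lam q)"
  define Pm where "Pm = {\<sigma>. \<sigma> permutes {0..<n}}"
  define a where "a \<sigma> = (\<Prod>k<n. lam k (\<sigma> k) powr q)" for \<sigma>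
  define b where "b \<sigma> = (\<Prod>k<n. L k (\<sigma> k) powr q)" for \<sigma>
  have pos: "0 < lam k (\<sigma> k)" "0 < L k (\<sigma> k)" if "\<sigma> \<in> Pm" "0 < a \<sigma>" "k < n" for \<sigma> k
  proof -
    have "lam k (\<sigma> k) \<noteq> 0"
      using that(2,3) unfolding a_def by (metis finite_lessThan lessThan_iff less_irrefl powr_0 prod_zero_iff)
    with lam_nonneg[of k "\<sigma> k"] that show "0 < lam k (\<sigma> k)"
      by (simp add: Pm_def permutes_nat_less)
    show "0 < L k (\<sigma> k)"
      using that per_pos unfolding L_def a_def Pm_def
      by (intro per_marginal_pos) (auto simp: epow_def)
  qed
  have log_ratio: "a \<sigma> * ln (a \<sigma> / b \<sigma>)
      = a \<sigma> * (\<Sum>k<n. q * (ln (lam k (\<sigma> k)) - ln (L k (\<sigma> k))))" if "\<sigma> \<in> Pm" for \<sigma>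
  proof (cases "0 < a \<sigma>")
    case True
    then show ?thesis
      unfolding a_def b_def using pos[OF that True] by (subst ln_prod_powr_divide) auto
  qed (simp add: a_def prod_nonneg order_less_le)
  have "(\<Sum>\<sigma>\<in>Pm. a \<sigma> * ln (a \<sigma> / b \<sigma>))
      = (\<Sum>\<sigma>\<in>Pm. a \<sigma> * (\<Sum>k<n. q * (ln (lam k (\<sigma> k)) - ln (L k (\<sigma> k)))))"
    by (rule sum.cong) (simp_all add: log_ratio)
  also have "\<dots> \<le> 0"
    using sum_permutes_log_ratio_per_marginal_nonpos[OF assms] by (simp add: Pm_def a_def L_def epow_def)
  finally have "sum a Pm \<le> sum b Pm"
    by (rule sum_le_sum_of_relative_entropy_nonpos[rotated 4])
      (use pos in \<open>auto simp: Pm_def a_def b_def finite_permutations less_imp_not_eq2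
        intro!: prod_nonneg prod_pos\<close>)
  then show ?thesis
    by (simp add: per_def epow_def a_def b_def Pm_def L_def)
qed

theorem lemma2p3:
  fixes n :: nat and p q :: real and lam :: "nat \<Rightarrow> nat \<Rightarrow> real"
  assumes "n \<ge> 2" and "1 \<le> p" and "q = 1 / p"
    and "\<And>i j. i < n \<Longrightarrow> j < n \<Longrightarrow> lam i j \<ge> 0"
    and "\<And>i. i < n \<Longrightarrow> (\<Sum>j<n. lam i j) = 1"
    and "per n (epow lam q) > 0"
  shows "per n (epow (\<lambda>i j. (lam i j) powr q * per (n - 1) (minor (epow lam q) i j)
                              / per n (epow lam q)) q)
         \<ge> per n (epow lam q)"
proof -
  have "0 \<le> q"
    using assms(2,3) by simp
  then have "per n (epow lam q) \<le> per n (epow (per_marginal n (epow lam q)) q)"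
    using assms(4-6) by (intro per_epow_le_per_epow_per_marginal) auto
  also have "\<dots> = per n (epow (\<lambda>i j. (lam i j) powr q * per (n - 1) (minor (epow lam q) i j)
                              / per n (epow lam q)) q)"
    by (intro per_cong) (simp add: epow_def per_marginal_eq_minor)
  finally show ?thesis .
qed

end
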